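(* $\mathrm{Log}_{<1}(\mathbb{Q})\subseteq\mathrm{Log}_{<1}(\mathbb{R})$.
   Context: Modal formulas are built from a countable set of propositional variables using $\bot$, $\to$ and one unary modality $\lozenge$. A frame is a pair $(X,R)$; a valuation assigns subsets of $X$ to variables; $x\models\lozenge\varphi$ iff there is $y$ with $xRy$ and $y\models\varphi$. A formula is valid in a frame if true at every point under every valuation. For a metric space $(X,d)$, $\mathrm{Log}_{<1}(X)$ is the set of modal formulas valid in the frame $(X,R_{<1})$, where $xR_{<1}y$ iff $d(x,y)<1$. $\mathbb{R}$ and $\mathbb{Q}$ carry the metric $d(x,y)=|x-y|$. *)

theory Defs
  imports Complex_Main
begin

datatype fm = Var nat | Bot | Imp fm fm | Dia fm

fun sat :: "'a set \<Rightarrow> ('a \<Rightarrow> 'a \<Rightarrow> bool) \<Rightarrow> (nat \<Rightarrow> 'a set) \<Rightarrow> 'a \<Rightarrow> fm \<Rightarrow> bool" where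
  "sat X R V x (Var p) = (x \<in> V p)"
| "sat X R V x Bot = False"
| "sat X R V x (Imp a b) = (sat X R V x a \<longrightarrow> sat X R V x b)"
| "sat X R V x (Dia a) = (\<exists>y\<in>X. R x y \<and> sat X R V y a)"

definition valid_in_frame :: "'a set \<Rightarrow> ('a \<Rightarrow> 'a \<Rightarrow> bool) \<Rightarrow> fm \<Rightarrow> bool" where
  "valid_in_frame X R \<phi> \<longleftrightarrow>
     (\<forall>V. (\<forall>p. V p \<subseteq> X) \<longrightarrow> (\<forall>x\<in>X. sat X R V x \<phi>))"

definition Log_lt1 :: "'a set \<Rightarrow> ('a \<Rightarrow> 'a \<Rightarrow> real) \<Rightarrow> fm set" where
  "Log_lt1 X d = {\<phi>. valid_in_frame X (\<lambda>x y. d x y < 1) \<phi>}"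

end

theory Submission
  imports Defs "HOL-Library.Countable_Set"
begin

(* Fix a valuation V on the reals and a point x0. A back-and-forth construction gives a map
   g from the rationals to the reals with floor (g a - g b) = floor (a - b), whose image contains
   x0 and, for every formula psi and every interval with rational end points in which psi holds
   somewhere, a point of that interval where psi holds; there are only countably many such
   requirements. Preserving these floors means g preserves and reflects |a - b| < 1, and the
   chosen points supply the back condition of a bounded morphism up to truth of formulas.
   Hence the pull-back of V along g makes every formula true at a exactly when it is true
   at g a, and a formula refuted at x0 on the reals is refuted on the rationals. *)

(* Unlike a bounded morphism, the back condition only asks for a preimage point satisfying the
   same formula under V, not for a preimage of the given point. *)
definition weak_bounded_morphism ::
    "'a set \<Rightarrow> ('a \<Rightarrow> 'a \<Rightarrow> bool) \<Rightarrow> 'b set \<Rightarrow> ('b \<Rightarrow> 'b \<Rightarrow> bool) \<Rightarrow> (nat \<Rightarrow> 'b set) \<Rightarrow> ('a \<Rightarrow> 'b) \<Rightarrow> bool"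
  where
  "weak_bounded_morphism X R Y S V g \<longleftrightarrow>
     g ` X \<subseteq> Y \<and>
     (\<forall>a\<in>X. \<forall>b\<in>X. R a b \<longrightarrow> S (g a) (g b)) \<and>
     (\<forall>a\<in>X. \<forall>y\<in>Y. \<forall>\<psi>. S (g a) y \<and> sat Y S V y \<psi> \<longrightarrow> (\<exists>b\<in>X. R a b \<and> sat Y S V (g b) \<psi>))"

lemma sat_pullback_iff:
  assumes g: "weak_bounded_morphism X R Y S V g" and "a \<in> X"
  shows "sat X R (\<lambda>p. {b\<in>X. g b \<in> V p}) a \<psi> \<longleftrightarrow> sat Y S V (g a) \<psi>"
  using \<open>a \<in> X\<close>
proof (induction \<psi> arbitrary: a)
  case (Dia \<psi>)
  have into: "g ` X \<subseteq> Y"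
    and forth: "\<And>b. b \<in> X \<Longrightarrow> R a b \<Longrightarrow> S (g a) (g b)"
    and lift: "\<And>y. y \<in> Y \<Longrightarrow> S (g a) y \<Longrightarrow> sat Y S V y \<psi> \<Longrightarrow>
      \<exists>b\<in>X. R a b \<and> sat Y S V (g b) \<psi>"
    using g Dia.prems unfolding weak_bounded_morphism_def by auto
  show ?case
  proof
    assume "sat X R (\<lambda>p. {b\<in>X. g b \<in> V p}) a (Dia \<psi>)"
    then obtain b where "b \<in> X" "R a b" "sat X R (\<lambda>p. {b\<in>X. g b \<in> V p}) b \<psi>"
      by auto
    then show "sat Y S V (g a) (Dia \<psi>)"
      using Dia.IH forth into by (auto intro!: bexI[of _ "g b"])
  next
    assume "sat Y S V (g a) (Dia \<psi>)"
    then obtain y where "y \<in> Y" "S (g a) y" "sat Y S V y \<psi>"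
      by auto
    then obtain b where "b \<in> X" "R a b" "sat Y S V (g b) \<psi>"
      using lift by blast
    then show "sat X R (\<lambda>p. {b\<in>X. g b \<in> V p}) a (Dia \<psi>)"
      using Dia.IH by auto
  qed
qed simp_all

lemma valid_in_frame_if_weak_bounded_morphisms:
  assumes valid: "valid_in_frame X R \<phi>"
    and onto: "\<And>V y. (\<forall>p. V p \<subseteq> Y) \<Longrightarrow> y \<in> Y \<Longrightarrow>
      \<exists>g. weak_bounded_morphism X R Y S V g \<and> y \<in> g ` X"
  shows "valid_in_frame Y S \<phi>"
  unfolding valid_in_frame_def
proof (intro allI impI ballI)
  fix V :: "nat \<Rightarrow> 'b set" and y
  assume "\<forall>p. V p \<subseteq> Y" "y \<in> Y"
  then have "\<exists>g. weak_bounded_morphism X R Y S V g \<and> y \<in> g ` X"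
    by (rule onto)
  then obtain g where g: "weak_bounded_morphism X R Y S V g" and "y \<in> g ` X"
    by (elim exE conjE)
  then obtain a where a: "a \<in> X" "y = g a"
    by (elim imageE) simp
  have "sat X R (\<lambda>p. {b\<in>X. g b \<in> V p}) a \<phi>"
    using valid a(1) unfolding valid_in_frame_def
    by (elim allE[of _ "\<lambda>p. {b\<in>X. g b \<in> V p}"]) auto
  then show "sat Y S V y \<phi>"
    using sat_pullback_iff[OF g a(1)] a(2) by simp
qed

lemma pairwise_back_and_forth:
  fixes Q :: "'a \<times> 'b \<Rightarrow> 'a \<times> 'b \<Rightarrow> bool" and \<alpha> :: "nat \<Rightarrow> 'a" and \<beta> :: "nat \<Rightarrow> 'b"
  assumes "range \<alpha> \<subseteq> A" "range \<beta> \<subseteq> B"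
    and forth_step: "\<And>S a. finite S \<Longrightarrow> S \<subseteq> A \<times> B \<Longrightarrow> pairwise Q S \<Longrightarrow> a \<in> A \<Longrightarrow>
      \<exists>b\<in>B. pairwise Q (insert (a, b) S)"
    and back_step: "\<And>S b. finite S \<Longrightarrow> S \<subseteq> A \<times> B \<Longrightarrow> pairwise Q S \<Longrightarrow> b \<in> B \<Longrightarrow>
      \<exists>a\<in>A. pairwise Q (insert (a, b) S)"
  shows "\<exists>F \<subseteq> A \<times> B. pairwise Q F \<and> range \<alpha> \<subseteq> fst ` F \<and> range \<beta> \<subseteq> snd ` F"
proof -
  define ok where "ok S \<longleftrightarrow> finite S \<and> S \<subseteq> A \<times> B \<and> pairwise Q S" for S
  have extension: "\<exists>T. ok T \<and> S \<subseteq> T \<and> \<alpha> n \<in> fst ` T \<and> \<beta> n \<in> snd ` T"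
    if "ok S" for S n
  proof -
    obtain b where b: "b \<in> B" "pairwise Q (insert (\<alpha> n, b) S)"
      using forth_step \<open>ok S\<close> assms(1) unfolding ok_def by blast
    obtain a where a: "a \<in> A" "pairwise Q (insert (a, \<beta> n) (insert (\<alpha> n, b) S))"
      using back_step[of "insert (\<alpha> n, b) S" "\<beta> n"] \<open>ok S\<close> assms(1,2) b
      unfolding ok_def by blast
    show ?thesis
      by (rule exI[of _ "insert (a, \<beta> n) (insert (\<alpha> n, b) S)"])
        (use \<open>ok S\<close> assms(1,2) a b in \<open>auto simp: ok_def image_iff\<close>)
  qed
  define extend where
    "extend n S = (SOME T. ok T \<and> S \<subseteq> T \<and> \<alpha> n \<in> fst ` T \<and> \<beta> n \<in> snd ` T)" for n S
  have extend: "ok (extend n S) \<and> S \<subseteq> extend n S \<and> \<alpha> n \<in> fst ` extend n S \<and> \<beta> n \<in> snd ` extend n S"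
    if "ok S" for S n
    unfolding extend_def by (rule someI_ex[OF extension[OF that]])
  define C where "C = rec_nat {} extend"
  have C_ok: "ok (C n)" for n
  proof (induction n)
    case 0
    show ?case by (simp add: C_def ok_def)
  next
    case (Suc n)
    then show ?case using extend by (simp add: C_def)
  qed
  have C_mono: "C m \<subseteq> C n" if "m \<le> n" for m n
    using lift_Suc_mono_le[of C, OF _ that] C_ok extend by (simp add: C_def)
  define F where "F = (\<Union>n. C n)"
  have "pairwise Q F"
    unfolding pairwise_def F_def
  proof (intro ballI impI)
    fix p q assume "p \<in> (\<Union>n. C n)" "q \<in> (\<Union>n. C n)" "p \<noteq> q"
    then obtain m n where "p \<in> C m" "q \<in> C n"
      by blast
    then have "p \<in> C (max m n)" "q \<in> C (max m n)"
      using C_mono[of m "max m n"] C_mono[of n "max m n"] by auto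
    then show "Q p q"
      using C_ok[of "max m n"] \<open>p \<noteq> q\<close> unfolding ok_def pairwise_def by blast
  qed
  moreover have "F \<subseteq> A \<times> B"
    using C_ok unfolding F_def ok_def by blast
  moreover have "range \<alpha> \<subseteq> fst ` F" "range \<beta> \<subseteq> snd ` F"
  proof -
    have step: "\<alpha> n \<in> fst ` C (Suc n)" "\<beta> n \<in> snd ` C (Suc n)" for n
      using extend[OF C_ok[of n]] by (simp_all add: C_def)
    have "C (Suc n) \<subseteq> F" for n
      unfolding F_def by blast
    then have "\<alpha> n \<in> fst ` F" "\<beta> n \<in> snd ` F" for n
      using step[of n] by blast+
    then show "range \<alpha> \<subseteq> fst ` F" "range \<beta> \<subseteq> snd ` F"
      by auto
  qed
  ultimately show ?thesis by blast
qed

(* For pairs matched in both orders, equal floors of differences say that a < b + k iff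
   x < y + k for every integer k; in particular |a - b| < 1 iff |x - y| < 1. *)
definition same_floor_diff :: "real \<times> real \<Rightarrow> real \<times> real \<Rightarrow> bool" where
  "same_floor_diff p q \<longleftrightarrow> \<lfloor>fst p - fst q\<rfloor> = \<lfloor>snd p - snd q\<rfloor>"

lemma pairwise_same_floor_diffD:
  assumes "pairwise same_floor_diff S" "(a, x) \<in> S" "(b, y) \<in> S"
  shows "\<lfloor>a - b\<rfloor> = \<lfloor>x - y\<rfloor>"
proof (cases "(a, x) = (b, y)")
  case False
  then show ?thesis
    using assms unfolding pairwise_def same_floor_diff_def by (metis fst_conv snd_conv)
qed simp

lemma pairwise_same_floor_diff_insert:
  "pairwise same_floor_diff (insert (a, x) S) \<longleftrightarrow>
     pairwise same_floor_diff S \<and> (\<forall>(c, z)\<in>S. \<lfloor>a - c\<rfloor> = \<lfloor>x - z\<rfloor> \<and> \<lfloor>c - a\<rfloor> = \<lfloor>z - x\<rfloor>)"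
  unfolding pairwise_insert by (force simp: same_floor_diff_def)

lemma pairwise_same_floor_diff_swap:
  "pairwise same_floor_diff (prod.swap ` S) \<longleftrightarrow> pairwise same_floor_diff S"
  unfolding pairwise_def same_floor_diff_def by force

lemma floor_minus_not_Ints:
  fixes t :: real
  assumes "t \<notin> \<int>"
  shows "\<lfloor>- t\<rfloor> = - \<lfloor>t\<rfloor> - 1"
proof -
  have "t \<noteq> of_int \<lfloor>t\<rfloor>"
    using assms by (metis Ints_of_int)
  then show ?thesis
    by (simp add: floor_minus ceiling_altdef)
qed

lemma dense_in_finite_intersection_of_intervals:
  fixes l u :: "'i \<Rightarrow> real"
  assumes "finite I" and overlap: "\<And>i j. i \<in> I \<Longrightarrow> j \<in> I \<Longrightarrow> l i < u j"
    and dense: "\<And>v w. v < w \<Longrightarrow> \<exists>x\<in>D. v < x \<and> x < w"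
  shows "\<exists>x\<in>D. \<forall>i\<in>I. l i < x \<and> x < u i"
proof (cases "I = {}")
  case True
  then show ?thesis
    using dense[of 0 1] by auto
next
  case False
  have "Max (l ` I) < Min (u ` I)"
    using \<open>finite I\<close> False overlap by simp
  then obtain x where "x \<in> D" "Max (l ` I) < x" "x < Min (u ` I)"
    using dense by blast
  then show ?thesis
    using \<open>finite I\<close> False by auto
qed

lemma same_floor_diff_extension:
  fixes S :: "(real \<times> real) set" and D :: "real set"
  assumes S: "finite S" "pairwise same_floor_diff S" "snd ` S \<subseteq> D"
    and dense: "\<And>v w. v < w \<Longrightarrow> \<exists>x\<in>D. v < x \<and> x < w"
    and shift: "\<And>x k. x \<in> D \<Longrightarrow> x + of_int k \<in> D"
  shows "\<exists>x\<in>D. pairwise same_floor_diff (insert (a, x) S)"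
  \<comment> \<open>If a is congruent modulo 1 to a matched point b, the image of a is forced; otherwise
    each matched pair confines it to an open unit interval, and these intervals overlap.\<close>
proof (cases "\<exists>(b, y)\<in>S. a - b \<in> \<int>")
  case True
  then obtain b y where bS: "(b, y) \<in> S" and "a - b \<in> \<int>"
    by blast
  then obtain k where "a - b = of_int k"
    by (elim Ints_cases)
  then have k: "a = b + of_int k"
    by linarith
  have "\<lfloor>a - c\<rfloor> = \<lfloor>y + of_int k - z\<rfloor> \<and> \<lfloor>c - a\<rfloor> = \<lfloor>z - (y + of_int k)\<rfloor>" if "(c, z) \<in> S" for c z
  proof -
    have "\<lfloor>b - c\<rfloor> = \<lfloor>y - z\<rfloor>" "\<lfloor>c - b\<rfloor> = \<lfloor>z - y\<rfloor>"
      using pairwise_same_floor_diffD[OF S(2)] \<open>(b, y) \<in> S\<close> that by blast+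
    moreover have "a - c = (b - c) + of_int k" "y + of_int k - z = (y - z) + of_int k"
      "c - a = (c - b) - of_int k" "z - (y + of_int k) = (z - y) - of_int k"
      by (simp_all add: k)
    ultimately show ?thesis
      by (simp only: floor_add_int[symmetric] floor_diff_of_int)
  qed
  moreover have "y + of_int k \<in> D"
    using shift S(3) bS by force
  ultimately show ?thesis
    using S(2) by (auto simp: pairwise_same_floor_diff_insert)
next
  case False
  have overlap: "z + \<lfloor>a - c\<rfloor> < z' + \<lfloor>a - c'\<rfloor> + 1" if "(c, z) \<in> S" "(c', z') \<in> S" for c z c' z'
  proof -
    have "\<lfloor>c - c'\<rfloor> = \<lfloor>z - z'\<rfloor>"
      using pairwise_same_floor_diffD[OF S(2) that] .
    moreover have "\<lfloor>c - c'\<rfloor> + \<lfloor>a - c\<rfloor> \<le> \<lfloor>a - c'\<rfloor>"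
      using le_floor_add[of "c - c'" "a - c"] by simp
    ultimately show ?thesis
      using floor_correct[of "z - z'"] by linarith
  qed
  obtain x where "x \<in> D" and x: "\<And>c z. (c, z) \<in> S \<Longrightarrow> z + \<lfloor>a - c\<rfloor> < x \<and> x < z + \<lfloor>a - c\<rfloor> + 1"
    using dense_in_finite_intersection_of_intervals[of S "\<lambda>(c, z). z + \<lfloor>a - c\<rfloor>"
        "\<lambda>(c, z). z + \<lfloor>a - c\<rfloor> + 1" D] S(1) overlap dense
    by fastforce
  have "\<lfloor>a - c\<rfloor> = \<lfloor>x - z\<rfloor> \<and> \<lfloor>c - a\<rfloor> = \<lfloor>z - x\<rfloor>" if "(c, z) \<in> S" for c z
  proof -
    have "\<lfloor>x - z\<rfloor> = \<lfloor>a - c\<rfloor>" "\<lfloor>z - x\<rfloor> = - \<lfloor>a - c\<rfloor> - 1"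
      using x[OF that] by (simp_all add: floor_eq_iff)
    moreover have "\<lfloor>c - a\<rfloor> = - \<lfloor>a - c\<rfloor> - 1"
      using floor_minus_not_Ints[of "a - c"] False that by auto
    ultimately show ?thesis by simp
  qed
  then show ?thesis
    using \<open>x \<in> D\<close> S(2) by (auto simp: pairwise_same_floor_diff_insert)
qed

lemma floor_diff_preserving_map_from_Rats:
  fixes W :: "real set"
  assumes "countable W"
  shows "\<exists>g :: real \<Rightarrow> real. (\<forall>a\<in>\<rat>. \<forall>b\<in>\<rat>. \<lfloor>g a - g b\<rfloor> = \<lfloor>a - b\<rfloor>) \<and> W \<subseteq> g ` \<rat>"
proof -
  have forth_step: "\<exists>x\<in>UNIV. pairwise same_floor_diff (insert (a, x) S)"
    if "finite S" "S \<subseteq> \<rat> \<times> UNIV" "pairwise same_floor_diff S" "a \<in> \<rat>" for S and a :: real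
  proof (rule same_floor_diff_extension[OF that(1,3) subset_UNIV])
    show "\<exists>x\<in>UNIV. v < x \<and> x < w" if "v < w" for v w :: real
      using dense[OF that] by blast
  qed simp
  have Rats_shift: "q + of_int k \<in> \<rat>" if "q \<in> \<rat>" for q :: real and k
    using that by simp
  have back_step: "\<exists>a\<in>\<rat>. pairwise same_floor_diff (insert (a, x) S)"
    if "finite S" "S \<subseteq> \<rat> \<times> UNIV" "pairwise same_floor_diff S" "x \<in> UNIV" for S and x :: real
  proof -
    have "finite (prod.swap ` S)"
      using that(1) by simp
    moreover have "pairwise same_floor_diff (prod.swap ` S)"
      using that(3) by (simp only: pairwise_same_floor_diff_swap)
    moreover have "snd ` prod.swap ` S \<subseteq> \<rat>"
      using that(2) by auto
    ultimately have "\<exists>a\<in>\<rat>. pairwise same_floor_diff (insert (x, a) (prod.swap ` S))"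
      by (rule same_floor_diff_extension[OF _ _ _ Rats_dense_in_real Rats_shift])
    moreover have "insert (x, a) (prod.swap ` S) = prod.swap ` insert (a, x) S" for a
      by simp
    ultimately show ?thesis
      by (metis pairwise_same_floor_diff_swap)
  qed
  have Rats_enum: "range (from_nat_into \<rat>) = (\<rat> :: real set)"
    by (rule range_from_nat_into) (use Rats_0 countable_rat in auto)
  then have "range (from_nat_into \<rat>) \<subseteq> (\<rat> :: real set)"
    by simp
  then have "\<exists>F \<subseteq> \<rat> \<times> UNIV. pairwise same_floor_diff F \<and>
      range (from_nat_into \<rat>) \<subseteq> fst ` F \<and> range (from_nat_into W) \<subseteq> snd ` F"
    by (rule pairwise_back_and_forth[OF _ subset_UNIV forth_step back_step])
  then obtain F where F: "F \<subseteq> \<rat> \<times> UNIV" "pairwise same_floor_diff F"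
    and dom: "range (from_nat_into \<rat>) \<subseteq> fst ` F" and ran: "range (from_nat_into W) \<subseteq> snd ` F"
    by blast
  have functional: "x = y" if "(a, x) \<in> F" "(a, y) \<in> F" for a x y
  proof -
    have "0 \<le> \<lfloor>x - y\<rfloor>" "0 \<le> \<lfloor>y - x\<rfloor>"
      using pairwise_same_floor_diffD[OF F(2) that] pairwise_same_floor_diffD[OF F(2) that(2,1)]
      by simp_all
    then have "0 \<le> x - y" "0 \<le> y - x"
      by (simp_all only: zero_le_floor)
    then show "x = y"
      by linarith
  qed
  define g where "g a = (SOME x. (a, x) \<in> F)" for a
  have g: "g a = x" if "(a, x) \<in> F" for a x
    unfolding g_def using that functional by (metis someI)
  have graph: "(a, g a) \<in> F" if "a \<in> \<rat>" for a
  proof -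
    have "a \<in> fst ` F"
      using dom that unfolding Rats_enum by blast
    then obtain x where "(a, x) \<in> F"
      by force
    then show ?thesis
      using g by simp
  qed
  have "\<lfloor>g a - g b\<rfloor> = \<lfloor>a - b\<rfloor>" if "a \<in> \<rat>" "b \<in> \<rat>" for a b
    using pairwise_same_floor_diffD[OF F(2) graph graph] that by simp
  moreover have "W \<subseteq> g ` \<rat>"
  proof
    fix w assume "w \<in> W"
    then have "w \<in> snd ` F"
      using subset_range_from_nat_into[OF assms] ran by blast
    then obtain a where "(a, w) \<in> F"
      by force
    then show "w \<in> g ` \<rat>"
      using F(1) g by (intro rev_image_eqI[of a]) auto
  qed
  ultimately show ?thesis
    by blast
qed

lemma countable_interval_witnesses:
  fixes P :: "'i::countable \<Rightarrow> real \<Rightarrow> bool"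
  obtains W where "countable W"
    and "\<And>i u v y. P i y \<Longrightarrow> u < y \<Longrightarrow> y < v \<Longrightarrow> \<exists>w\<in>W. P i w \<and> u < w \<and> w < v"
proof
  define pick :: "'i \<times> rat \<times> rat \<Rightarrow> real"
    where "pick = (\<lambda>(i, p, r). SOME w. P i w \<and> of_rat p < w \<and> w < of_rat r)"
  show "countable (range pick)"
    by (intro countable_image countableI_type)
  fix i u v y
  assume "P i y" "u < y" "y < v"
  then obtain p r where "u < of_rat p" "of_rat p < y" "y < of_rat r" "of_rat r < v"
    using of_rat_dense by meson
  then have "\<exists>w. P i w \<and> of_rat p < w \<and> w < of_rat r"
    using \<open>P i y\<close> by blast
  then have "P i (pick (i, p, r)) \<and> of_rat p < pick (i, p, r) \<and> pick (i, p, r) < of_rat r"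
    unfolding pick_def prod.case by (rule someI_ex)
  then show "\<exists>w\<in>range pick. P i w \<and> u < w \<and> w < v"
    using \<open>u < of_rat p\<close> \<open>of_rat r < v\<close> by force
qed

instance fm :: countable
  by countable_datatype

lemma Rats_weak_bounded_morphism_onto:
  fixes V :: "nat \<Rightarrow> real set" and y :: real
  shows "\<exists>g. weak_bounded_morphism (\<rat> :: real set) (\<lambda>a b. \<bar>a - b\<bar> < 1) UNIV (\<lambda>x y. \<bar>x - y\<bar> < 1) V g
    \<and> y \<in> g ` \<rat>"
proof -
  let ?R = "\<lambda>x y :: real. \<bar>x - y\<bar> < 1"
  obtain W where "countable W" and W: "\<And>\<psi> u v z. sat UNIV ?R V z \<psi> \<Longrightarrow> u < z \<Longrightarrow> z < v \<Longrightarrow>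
      \<exists>w\<in>W. sat UNIV ?R V w \<psi> \<and> u < w \<and> w < v"
    using countable_interval_witnesses[where P = "\<lambda>\<psi> z. sat UNIV ?R V z \<psi>"] by blast
  obtain g :: "real \<Rightarrow> real" where g: "\<forall>a\<in>\<rat>. \<forall>b\<in>\<rat>. \<lfloor>g a - g b\<rfloor> = \<lfloor>a - b\<rfloor>"
    and onto: "insert y W \<subseteq> g ` \<rat>"
    using floor_diff_preserving_map_from_Rats[of "insert y W"] \<open>countable W\<close> by auto
  have unit_dist_iff: "?R s t \<longleftrightarrow> \<lfloor>s - t\<rfloor> < 1 \<and> \<lfloor>t - s\<rfloor> < 1" for s t
    by auto
  have R_iff: "?R (g a) (g b) \<longleftrightarrow> ?R a b" if "a \<in> \<rat>" "b \<in> \<rat>" for a b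
    using g that by (simp only: unit_dist_iff)
  have "weak_bounded_morphism \<rat> ?R UNIV ?R V g"
    unfolding weak_bounded_morphism_def
  proof (intro conjI ballI allI impI)
    fix a b assume "a \<in> \<rat>" "b \<in> \<rat>" "?R a b"
    then show "?R (g a) (g b)"
      using R_iff by blast
  next
    fix a z \<psi> assume "a \<in> \<rat>" and z: "?R (g a) z \<and> sat UNIV ?R V z \<psi>"
    then obtain w where "w \<in> W" "sat UNIV ?R V w \<psi>" "?R (g a) w"
      using W[of z \<psi> "g a - 1" "g a + 1"] by (auto simp: abs_less_iff)
    moreover obtain b where "b \<in> \<rat>" "w = g b"
      using onto \<open>w \<in> W\<close> by blast
    ultimately show "\<exists>b\<in>\<rat>. ?R a b \<and> sat UNIV ?R V (g b) \<psi>"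
      using R_iff[OF \<open>a \<in> \<rat>\<close> \<open>b \<in> \<rat>\<close>] by blast
  qed simp
  then show ?thesis
    using onto by blast
qed

theorem theorem4p12:
  shows "Log_lt1 (\<rat> :: real set) (\<lambda>x y. \<bar>x - y\<bar>) \<subseteq> Log_lt1 (UNIV :: real set) (\<lambda>x y. \<bar>x - y\<bar>)"
proof
  fix \<phi> assume "\<phi> \<in> Log_lt1 (\<rat> :: real set) (\<lambda>x y. \<bar>x - y\<bar>)"
  then have "valid_in_frame (\<rat> :: real set) (\<lambda>x y. \<bar>x - y\<bar> < 1) \<phi>"
    by (simp add: Log_lt1_def)
  then have "valid_in_frame (UNIV :: real set) (\<lambda>x y. \<bar>x - y\<bar> < 1) \<phi>"
    by (rule valid_in_frame_if_weak_bounded_morphisms) (rule Rats_weak_bounded_morphism_onto)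
  then show "\<phi> \<in> Log_lt1 (UNIV :: real set) (\<lambda>x y. \<bar>x - y\<bar>)"
    by (simp add: Log_lt1_def)
qed

end
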